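(* Let $\mathbf G=(G,\le,\cdot,/,0,1)$ be a left-residuated po-groupoid. Then $\mathbf G$ satisfies both the double negation law $\neg\neg x=x$ (for all $x$) and the condition $$\neg x/y\le \neg z\iff z\le x\cdot y\quad\text{for all }x,y,z\in G$$ if and only if $\mathbf G$ satisfies the equation $x\cdot y=\neg(\neg x/y)$ for all $x,y\in G$. Moreover, in this case, for all $x,y\in G$ we have $x\le y$ iff $\neg y\le \neg x$.
   Context: A (bounded integral) left-residuated po-groupoid is a structure $\mathbf G=(G,\le,\cdot,/,0,1)$ where $(G,\le,0,1)$ is a bounded poset with least element $0$ and greatest element $1$, $\cdot$ is a binary operation on $G$ with $1\cdot x=x\cdot 1=x$ for all $x$ (no associativity, commutativity or monotonicity is assumed), and $/$ is a binary operation on $G$ satisfying the left residuation law: for all $x,y,z\in G$, $x\cdot y\le z\iff x\le z/y$. The negation is defined by $\neg x:=0/x$. *)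

theory Defs
  imports Main
begin

text \<open>A bounded integral left-residuated po-groupoid on the whole type 'a:
  le is a partial order with least element z (0) and greatest element u (1);
  m is a binary operation with unit u; r (written /) is a left residual of m:
  m x y \<le> w  iff  x \<le> r w y.\<close>

definition left_res_pogroupoid ::
  "('a \<Rightarrow> 'a \<Rightarrow> bool) \<Rightarrow> ('a \<Rightarrow> 'a \<Rightarrow> 'a) \<Rightarrow> ('a \<Rightarrow> 'a \<Rightarrow> 'a) \<Rightarrow> 'a \<Rightarrow> 'a \<Rightarrow> bool" where
  "left_res_pogroupoid le m r z u \<longleftrightarrow>
     (\<forall>x. le x x) \<and>
     (\<forall>x y. le x y \<and> le y x \<longrightarrow> x = y) \<and>
     (\<forall>x y w. le x y \<and> le y w \<longrightarrow> le x w) \<and>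
     (\<forall>x. le z x) \<and> (\<forall>x. le x u) \<and>
     (\<forall>x. m u x = x \<and> m x u = x) \<and>
     (\<forall>x y w. le (m x y) w \<longleftrightarrow> le x (r w y))"

definition neg :: "('a \<Rightarrow> 'a \<Rightarrow> 'a) \<Rightarrow> 'a \<Rightarrow> 'a \<Rightarrow> 'a" where
  "neg r z x = r z x"

end

theory Submission
  imports Defs
begin

text \<open>Under double negation, the condition with y = 1 says that negation is a symmetric Galois
  connection: v \<le> \<not>w iff w \<le> \<not>v. Residuation turns both sides of x\<cdot>y = \<not>(\<not>x/y) into
  w \<le> \<not>(\<not>x/y) iff \<not>x/y \<le> \<not>w, so the equation and the condition are equivalent once
  double negation holds, and the equation itself forces double negation (take y = 1) and
  the symmetric Galois connection.\<close>

locale left_residuated_pogroupoid =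
  fixes le :: "'a \<Rightarrow> 'a \<Rightarrow> bool" and m r :: "'a \<Rightarrow> 'a \<Rightarrow> 'a" and z u :: 'a
  assumes pogroupoid: "left_res_pogroupoid le m r z u"
begin

lemma refl: "le x x"
  and antisym: "le x y \<Longrightarrow> le y x \<Longrightarrow> x = y"
  and bot_least: "le z x"
  and top_greatest: "le x u"
  and unit_left: "m u x = x"
  and unit_right: "m x u = x"
  and residuation: "le (m x y) w \<longleftrightarrow> le x (r w y)"
  using pogroupoid unfolding left_res_pogroupoid_def by blast+

lemma residual_unit: "r w u = w"
  by (metis antisym refl residuation unit_right)

lemma neg_unit: "neg r z u = z"
  by (simp add: neg_def residual_unit)

lemma neg_bot: "neg r z z = u"
  unfolding neg_def by (metis antisym top_greatest residuation unit_left refl)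

lemma le_neg_iff_mult_eq_bot: "le v (neg r z w) \<longleftrightarrow> m v w = z"
  unfolding neg_def using residuation antisym bot_least by blast

lemma double_neg_imp_order_reversing:
  assumes double_neg: "\<And>x. neg r z (neg r z x) = x"
    and neg_sym: "\<And>v w. le v (neg r z w) \<longleftrightarrow> le w (neg r z v)"
  shows "le x y \<longleftrightarrow> le (neg r z y) (neg r z x)"
  by (metis double_neg neg_sym)

lemma neg_condition_imp_neg_sym:
  assumes double_neg: "\<And>x. neg r z (neg r z x) = x"
    and cond: "\<And>x y w. le (r (neg r z x) y) (neg r z w) \<longleftrightarrow> le w (m x y)"
  shows "le v (neg r z w) \<longleftrightarrow> le w (neg r z v)"
  using cond[of "neg r z v" u w] by (simp add: double_neg residual_unit unit_right)

lemma neg_condition_imp_mult_eq: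
  assumes double_neg: "\<And>x. neg r z (neg r z x) = x"
    and cond: "\<And>x y w. le (r (neg r z x) y) (neg r z w) \<longleftrightarrow> le w (m x y)"
  shows "m x y = neg r z (r (neg r z x) y)"
proof (rule antisym)
  have "le (r (neg r z x) y) (neg r z (m x y))"
    using cond refl by blast
  then show "le (m x y) (neg r z (r (neg r z x) y))"
    using neg_condition_imp_neg_sym[OF double_neg cond] by blast
  show "le (neg r z (r (neg r z x) y)) (m x y)"
    using cond[of x y "neg r z (r (neg r z x) y)"] by (simp add: double_neg refl)
qed

context
  assumes mult_eq: "\<And>x y. m x y = neg r z (r (neg r z x) y)"
begin

lemma mult_eq_imp_double_neg: "neg r z (neg r z x) = x"
  using mult_eq[of x u] by (simp add: residual_unit unit_right)

lemma mult_eq_imp_neg_sym: "le v (neg r z w) \<longleftrightarrow> le w (neg r z v)"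
proof -
  have "le v (neg r z w) \<longleftrightarrow> neg r z (r (neg r z v) w) = z"
    by (simp add: le_neg_iff_mult_eq_bot mult_eq)
  also have "\<dots> \<longleftrightarrow> r (neg r z v) w = u"
    by (metis mult_eq_imp_double_neg neg_bot neg_unit)
  also have "\<dots> \<longleftrightarrow> le u (r (neg r z v) w)"
    using antisym top_greatest refl by blast
  also have "\<dots> \<longleftrightarrow> le w (neg r z v)"
    by (simp add: residuation[symmetric] unit_left)
  finally show ?thesis .
qed

lemma mult_eq_imp_neg_condition: "le (r (neg r z x) y) (neg r z w) \<longleftrightarrow> le w (m x y)"
  by (simp add: mult_eq_imp_neg_sym mult_eq[of x y])

end

end

theorem lemma2:
  fixes le :: "'a \<Rightarrow> 'a \<Rightarrow> bool" and m r :: "'a \<Rightarrow> 'a \<Rightarrow> 'a" and z u :: 'a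
  assumes "left_res_pogroupoid le m r z u"
  shows "(((\<forall>x. neg r z (neg r z x) = x) \<and>
           (\<forall>x y w. le (r (neg r z x) y) (neg r z w) \<longleftrightarrow> le w (m x y)))
          \<longleftrightarrow> (\<forall>x y. m x y = neg r z (r (neg r z x) y)))
       \<and> ((\<forall>x y. m x y = neg r z (r (neg r z x) y)) \<longrightarrow>
          (\<forall>x y. le x y \<longleftrightarrow> le (neg r z y) (neg r z x)))"
proof -
  interpret left_residuated_pogroupoid le m r z u
    using assms by unfold_locales
  show ?thesis
    using neg_condition_imp_mult_eq mult_eq_imp_double_neg mult_eq_imp_neg_condition
      double_neg_imp_order_reversing mult_eq_imp_neg_sym
    by metis
qed

end
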